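(* The logic $\mathsf{CK}\oplus\mathsf{C}_\Diamond\oplus\mathsf{I}_{\Diamond\Box}$ is a conservative extension of $\mathsf{CK}_\Box$: a $\Diamond$-free formula is derivable in $\mathsf{CK}\oplus\mathsf{C}_\Diamond\oplus\mathsf{I}_{\Diamond\Box}$ if and only if it is a theorem of $\mathsf{CK}_\Box$.
   Context: Formulas: $\mathbf{L}$ is generated from a countably infinite set of propositional variables by $\varphi ::= p \mid \bot \mid \varphi\wedge\varphi \mid \varphi\vee\varphi \mid \varphi\to\varphi \mid \Box\varphi \mid \Diamond\varphi$; $\neg\varphi:=\varphi\to\bot$. Axioms: $\mathsf{K}_\Box$: $\Box(\varphi\to\psi)\to(\Box\varphi\to\Box\psi)$; $\mathsf{K}_\Diamond$: $\Box(\varphi\to\psi)\to(\Diamond\varphi\to\Diamond\psi)$; $\mathsf{C}_\Diamond$: $\Diamond(\varphi\vee\psi)\to\Diamond\varphi\vee\Diamond\psi$; $\mathsf{I}_{\Diamond\Box}$: $(\Diamond\varphi\to\Box\psi)\to\Box(\varphi\to\psi)$. For a set $\mathsf{Ax}$ of axioms, $\mathsf{CK}\oplus\mathsf{Ax}$ is the relation $\Gamma\vdash_{\mathsf{Ax}}\varphi$ inductively generated by: (Ax) $\Gamma\vdash\varphi$ whenever $\varphi$ is a substitution instance of an axiom of a standard Hilbert axiomatisation of intuitionistic propositional logic, of $\mathsf{K}_\Box$, of $\mathsf{K}_\Diamond$, or of an element of $\mathsf{Ax}$; (El) $\Gamma\vdash\varphi$ if $\varphi\in\Gamma$; (MP)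 from $\Gamma\vdash\varphi$ and $\Gamma\vdash\varphi\to\psi$ infer $\Gamma\vdash\psi$; (Nec) from $\emptyset\vdash\varphi$ infer $\Gamma\vdash\Box\varphi$. A formula is derivable if $\emptyset\vdash_{\mathsf{Ax}}\varphi$. $\mathsf{CK}_\Box$ is the logic on $\Diamond$-free formulas axiomatised by intuitionistic propositional logic plus $\mathsf{K}_\Box$, closed under modus ponens and necessitation (from $\varphi$ infer $\Box\varphi$). A logic is a conservative extension of $\mathsf{CK}_\Box$ if its derivable $\Diamond$-free formulas are exactly the theorems of $\mathsf{CK}_\Box$. *)

theory Defs
  imports Main
begin

datatype form =
    Var nat
  | Bot
  | And form form
  | Or form form
  | Imp form form
  | Box form
  | Dia form

definition Neg :: "form \<Rightarrow> form" where
  "Neg \<phi> = Imp \<phi> Bot"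

fun dia_free :: "form \<Rightarrow> bool" where
  "dia_free (Var p) = True"
| "dia_free Bot = True"
| "dia_free (And a b) = (dia_free a \<and> dia_free b)"
| "dia_free (Or a b) = (dia_free a \<and> dia_free b)"
| "dia_free (Imp a b) = (dia_free a \<and> dia_free b)"
| "dia_free (Box a) = dia_free a"
| "dia_free (Dia a) = False"

inductive ipc_ax :: "form \<Rightarrow> bool" where
  ax1: "ipc_ax (Imp a (Imp b a))"
| ax2: "ipc_ax (Imp (Imp a (Imp b c)) (Imp (Imp a b) (Imp a c)))"
| ax3: "ipc_ax (Imp (And a b) a)"
| ax4: "ipc_ax (Imp (And a b) b)"
| ax5: "ipc_ax (Imp a (Imp b (And a b)))"
| ax6: "ipc_ax (Imp a (Or a b))"
| ax7: "ipc_ax (Imp b (Or a b))"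
| ax8: "ipc_ax (Imp (Imp a c) (Imp (Imp b c) (Imp (Or a b) c)))"
| ax9: "ipc_ax (Imp Bot a)"

definition K_box :: "form \<Rightarrow> bool" where
  "K_box \<phi> \<longleftrightarrow> (\<exists>a b. \<phi> = Imp (Box (Imp a b)) (Imp (Box a) (Box b)))"

definition K_dia :: "form \<Rightarrow> bool" where
  "K_dia \<phi> \<longleftrightarrow> (\<exists>a b. \<phi> = Imp (Box (Imp a b)) (Imp (Dia a) (Dia b)))"

definition C_dia :: "form \<Rightarrow> bool" where
  "C_dia \<phi> \<longleftrightarrow> (\<exists>a b. \<phi> = Imp (Dia (Or a b)) (Or (Dia a) (Dia b)))"

definition I_dia_box :: "form \<Rightarrow> bool" where
  "I_dia_box \<phi> \<longleftrightarrow> (\<exists>a b. \<phi> = Imp (Imp (Dia a) (Box b)) (Box (Imp a b)))"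

text \<open>The consequence relation of CK \<oplus> Ax, where the extra axioms are given as a
  predicate closed under substitution (schemata).\<close>
inductive CK_deriv :: "(form \<Rightarrow> bool) \<Rightarrow> form set \<Rightarrow> form \<Rightarrow> bool" for Ax where
  Ax_ipc: "ipc_ax \<phi> \<Longrightarrow> CK_deriv Ax \<Gamma> \<phi>"
| Ax_Kbox: "K_box \<phi> \<Longrightarrow> CK_deriv Ax \<Gamma> \<phi>"
| Ax_Kdia: "K_dia \<phi> \<Longrightarrow> CK_deriv Ax \<Gamma> \<phi>"
| Ax_extra: "Ax \<phi> \<Longrightarrow> CK_deriv Ax \<Gamma> \<phi>"
| El: "\<phi> \<in> \<Gamma> \<Longrightarrow> CK_deriv Ax \<Gamma> \<phi>"
| MP: "CK_deriv Ax \<Gamma> \<phi> \<Longrightarrow> CK_deriv Ax \<Gamma> (Imp \<phi> \<psi>) \<Longrightarrow> CK_deriv Ax \<Gamma> \<psi>"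
| Nec: "CK_deriv Ax {} \<phi> \<Longrightarrow> CK_deriv Ax \<Gamma> (Box \<phi>)"

inductive CK_box_thm :: "form \<Rightarrow> bool" where
  B_ipc: "ipc_ax \<phi> \<Longrightarrow> dia_free \<phi> \<Longrightarrow> CK_box_thm \<phi>"
| B_K: "K_box \<phi> \<Longrightarrow> dia_free \<phi> \<Longrightarrow> CK_box_thm \<phi>"
| B_MP: "CK_box_thm \<phi> \<Longrightarrow> CK_box_thm (Imp \<phi> \<psi>) \<Longrightarrow> CK_box_thm \<psi>"
| B_Nec: "CK_box_thm \<phi> \<Longrightarrow> CK_box_thm (Box \<phi>)"

end

theory Submission
  imports Defs
begin

text \<open>Replacing every subformula \<open>\<Diamond>a\<close> by \<open>\<top>\<close> maps \<open>K\<^sub>\<Diamond>\<close> and \<open>C\<^sub>\<Diamond>\<close> to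
  trivial implications between copies of \<open>\<top>\<close>, and \<open>I\<^sub>\<Diamond>\<^sub>\<Box>\<close> to
  \<open>(\<top> \<rightarrow> \<Box>b) \<rightarrow> \<Box>(a \<rightarrow> b)\<close>, which holds in \<open>CK\<^sub>\<Box>\<close> because \<open>\<Box>b \<rightarrow> \<Box>(a \<rightarrow> b)\<close> does.
  Since erasure commutes with the other connectives and is the identity on
  \<open>\<Diamond>\<close>-free formulas, every derivation of \<open>CK \<oplus> C\<^sub>\<Diamond> \<oplus> I\<^sub>\<Diamond>\<^sub>\<Box>\<close> erases to a
  \<open>CK\<^sub>\<Box>\<close>-derivation of the erased conclusion; the converse inclusion is immediate.\<close>

definition Verum :: form where
  "Verum = Imp Bot Bot"

fun erase_dia :: "form \<Rightarrow> form" where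
  "erase_dia (Var p) = Var p"
| "erase_dia Bot = Bot"
| "erase_dia (And a b) = And (erase_dia a) (erase_dia b)"
| "erase_dia (Or a b) = Or (erase_dia a) (erase_dia b)"
| "erase_dia (Imp a b) = Imp (erase_dia a) (erase_dia b)"
| "erase_dia (Box a) = Box (erase_dia a)"
| "erase_dia (Dia a) = Verum"

lemma dia_free_Verum [simp]: "dia_free Verum"
  by (simp add: Verum_def)

lemma dia_free_erase_dia [simp]: "dia_free (erase_dia a)"
  by (induction a) auto

lemma erase_dia_dia_free: "dia_free a \<Longrightarrow> erase_dia a = a"
  by (induction a) auto

lemma ipc_ax_erase_dia: "ipc_ax \<phi> \<Longrightarrow> ipc_ax (erase_dia \<phi>)"
  by (induction rule: ipc_ax.induct) (auto intro: ipc_ax.intros)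

lemma CK_box_thm_dia_free: "CK_box_thm \<phi> \<Longrightarrow> dia_free \<phi>"
  by (induction rule: CK_box_thm.induct) (auto simp: K_box_def)

lemma CK_box_thm_Verum: "CK_box_thm Verum"
  unfolding Verum_def by (intro B_ipc ipc_ax.intros) auto

lemma CK_box_thm_weaken:
  assumes "CK_box_thm b" and "dia_free a"
  shows "CK_box_thm (Imp a b)"
proof -
  have "CK_box_thm (Imp b (Imp a b))"
    using assms CK_box_thm_dia_free by (intro B_ipc ipc_ax.intros) auto
  with assms(1) show ?thesis by (rule B_MP)
qed

lemma CK_box_thm_imp_refl:
  assumes "dia_free a"
  shows "CK_box_thm (Imp a a)"
proof -
  have "CK_box_thm (Imp (Imp a (Imp (Imp a a) a)) (Imp (Imp a (Imp a a)) (Imp a a)))"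
    and "CK_box_thm (Imp a (Imp (Imp a a) a))"
    and "CK_box_thm (Imp a (Imp a a))"
    using assms by (intro B_ipc ipc_ax.intros; simp)+
  then show ?thesis by (meson B_MP)
qed

lemma CK_box_thm_imp_trans:
  assumes ab: "CK_box_thm (Imp a b)" and bc: "CK_box_thm (Imp b c)"
  shows "CK_box_thm (Imp a c)"
proof -
  have "dia_free a" "dia_free b" "dia_free c"
    using ab bc by (auto dest: CK_box_thm_dia_free)
  then have "CK_box_thm (Imp (Imp a (Imp b c)) (Imp (Imp a b) (Imp a c)))"
    by (intro B_ipc ipc_ax.intros) auto
  moreover have "CK_box_thm (Imp a (Imp b c))"
    using bc \<open>dia_free a\<close> by (rule CK_box_thm_weaken)
  ultimately show ?thesis
    using ab by (meson B_MP)
qed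

lemma CK_box_thm_imp_discharge:
  assumes "CK_box_thm a" and "dia_free b"
  shows "CK_box_thm (Imp (Imp a b) b)"
proof -
  have "dia_free a"
    using assms(1) by (rule CK_box_thm_dia_free)
  with assms(2) have "CK_box_thm (Imp (Imp (Imp a b) (Imp a b)) (Imp (Imp (Imp a b) a) (Imp (Imp a b) b)))"
    by (intro B_ipc ipc_ax.intros) auto
  moreover have "CK_box_thm (Imp (Imp a b) (Imp a b))"
    using \<open>dia_free a\<close> assms(2) by (intro CK_box_thm_imp_refl) simp
  moreover have "CK_box_thm (Imp (Imp a b) a)"
    using assms \<open>dia_free a\<close> by (intro CK_box_thm_weaken) simp_all
  ultimately show ?thesis by (meson B_MP)
qed

lemma CK_box_thm_box_weaken:
  assumes "dia_free a" and "dia_free b"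
  shows "CK_box_thm (Imp (Box b) (Box (Imp a b)))"
proof -
  have "CK_box_thm (Imp b (Imp a b))"
    using assms by (intro B_ipc ipc_ax.intros) auto
  moreover have "CK_box_thm (Imp (Box (Imp b (Imp a b))) (Imp (Box b) (Box (Imp a b))))"
    using assms by (intro B_K) (auto simp: K_box_def)
  ultimately show ?thesis by (meson B_MP B_Nec)
qed

lemma CK_box_thm_erase_K_dia: "K_dia \<phi> \<Longrightarrow> CK_box_thm (erase_dia \<phi>)"
  by (auto simp: K_dia_def intro!: CK_box_thm_weaken CK_box_thm_imp_refl)

lemma CK_box_thm_erase_C_dia: "C_dia \<phi> \<Longrightarrow> CK_box_thm (erase_dia \<phi>)"
  by (auto simp: C_dia_def Verum_def intro!: B_ipc ipc_ax.intros)

lemma CK_box_thm_erase_I_dia_box: "I_dia_box \<phi> \<Longrightarrow> CK_box_thm (erase_dia \<phi>)"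
  by (auto simp: I_dia_box_def intro!: CK_box_thm_imp_trans[OF CK_box_thm_imp_discharge]
      CK_box_thm_Verum CK_box_thm_box_weaken)

lemma CK_box_thm_erase_dia_CK_deriv:
  assumes "CK_deriv Ax \<Gamma> \<phi>" and "\<Gamma> = {}"
    and Ax_erase: "\<And>\<psi>. Ax \<psi> \<Longrightarrow> CK_box_thm (erase_dia \<psi>)"
  shows "CK_box_thm (erase_dia \<phi>)"
  using assms(1,2)
proof (induction rule: CK_deriv.induct)
  case (Ax_ipc \<phi> \<Gamma>)
  then show ?case by (simp add: B_ipc ipc_ax_erase_dia)
next
  case (Ax_Kbox \<phi> \<Gamma>)
  then show ?case by (auto simp: K_box_def intro!: B_K)
next
  case (Ax_Kdia \<phi> \<Gamma>)
  then show ?case by (simp add: CK_box_thm_erase_K_dia)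
next
  case (Ax_extra \<phi> \<Gamma>)
  then show ?case by (simp add: Ax_erase)
next
  case (El \<phi> \<Gamma>)
  then show ?case by simp
next
  case (MP \<Gamma> \<phi> \<psi>)
  then show ?case by (auto intro: B_MP)
next
  case (Nec \<phi> \<Gamma>)
  then show ?case by (simp add: B_Nec)
qed

lemma CK_deriv_CK_box_thm: "CK_box_thm \<phi> \<Longrightarrow> CK_deriv Ax \<Gamma> \<phi>"
proof (induction arbitrary: \<Gamma> rule: CK_box_thm.induct)
  case (B_MP \<phi> \<psi>)
  then show ?case by (blast intro: CK_deriv.MP)
qed (auto intro: CK_deriv.Ax_ipc CK_deriv.Ax_Kbox CK_deriv.Nec)

theorem mainTheorem11:
  assumes "dia_free \<phi>"
  shows "CK_deriv (\<lambda>\<psi>. C_dia \<psi> \<or> I_dia_box \<psi>) {} \<phi> \<longleftrightarrow> CK_box_thm \<phi>"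
proof
  assume "CK_deriv (\<lambda>\<psi>. C_dia \<psi> \<or> I_dia_box \<psi>) {} \<phi>"
  then have "CK_box_thm (erase_dia \<phi>)"
    by (rule CK_box_thm_erase_dia_CK_deriv)
      (auto intro: CK_box_thm_erase_C_dia CK_box_thm_erase_I_dia_box)
  then show "CK_box_thm \<phi>"
    using erase_dia_dia_free[OF assms] by simp
next
  assume "CK_box_thm \<phi>"
  then show "CK_deriv (\<lambda>\<psi>. C_dia \<psi> \<or> I_dia_box \<psi>) {} \<phi>"
    by (rule CK_deriv_CK_box_thm)
qed

end
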